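(* Let the setting and $QW$ be as in the context, and suppose $\mathfrak{g}$ is conformal with respect to $\nabla$. Suppose there is a point $o\in\mathcal{M}$ where $|\mathfrak{a}_o|=|\mathfrak{b}_o|$ and the $\mathfrak{g}_o$-angle between $\mathfrak{a}_o$ and $\mathfrak{b}_o$ equals $2\pi/3$. Then $QW$ is right-invariant under rotations by $\pi/3$. That is, for every $p\in\mathcal{M}$, every rotation $R$ of the Euclidean plane $(T_p\mathcal{M},\mathfrak{g}_p)$ by angle $\pi/3$, and every $A\in\mathrm{Hom}(T_p\mathcal{M},\mathbb{R}^2)$, we have $QW_p(A\circ R)=QW_p(A)$.
   Context: Setting. $(\mathcal{M},\mathfrak{g})$ is a compact smooth two-dimensional Riemannian manifold which is a topological disc with smooth boundary, and $\nabla$ is a flat, symmetric (torsion-free) affine connection on $\mathcal{M}$. Let $\mathfrak{a},\mathfrak{b},\mathfrak{c}$ be $\nabla$-parallel vector fields with $\mathfrak{a}+\mathfrak{b}+\mathfrak{c}=0$, any two linearly independent at every point. Norms are taken with respect to $\mathfrak{g}$, and $\mathcal{M}$ is oriented so that $(\mathfrak{a},\mathfrak{b})$ is positive. Conformality. $\mathfrak{g}$ is conformal with respect to $\nabla$ if there is a positive function $\phi$ such that for all $\nabla$-parallel vector fields $\xi,\eta$ and all $p,q$, $\mathfrak{g}_p(\xi_p,\eta_p)/\phi^2(p)=\mathfrak{g}_q(\xi_q,\eta_q)/\phi^2(q)$. The functions $\Phi$ and $\Psi$. $\Phi:[0,\infty)\to[0,\infty)$ satisfies: - $\Phi(r)=0$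 if and only if $r=1$; - $\Phi(r)\ge\alpha_\Phi(r-1)^2$; - $\Phi(r)\le C_\Phi(1+r^2)$; - $|\Phi(r)-\Phi(s)|\le L_\Phi(1+|r|+|s|)|r-s|$ for $r,s>0$. $\Psi:\mathbb{R}\to[0,\infty)$ satisfies: - $\Psi(a)=0$ if and only if $a=1$; - $\Psi(a)>\alpha_\Psi\sqrt{|a|}$ for $a<0$; - $\Psi(a)<C_\Psi(1+|a|)$; - $|\Psi(a)-\Psi(b)|\le L_\Psi|a-b|$. All constants are positive. Energy density. Let $\nu=(\mathfrak{g}(\mathfrak{a},\mathfrak{a})\mathfrak{g}(\mathfrak{b},\mathfrak{b})-\mathfrak{g}(\mathfrak{a},\mathfrak{b})^2)^{1/2}$. For $A\in\mathrm{Hom}(T_p\mathcal{M},\mathbb{R}^2)$, let $\det A=\det[A(\mathfrak{a}_p)|A(\mathfrak{b}_p)]/\nu(p)$, with $\det[u|w]=u_1w_2-u_2w_1$. With $\rho^{\mathfrak{u}}=|\mathfrak{u}|/(|\mathfrak{a}|+|\mathfrak{b}|+|\mathfrak{c}|)$, \[ W_p(A)=\sum_{\mathfrak{u}\in\{\mathfrak{a},\mathfrak{b},\mathfrak{c}\}}\rho^{\mathfrak{u}}(p)\Phi(|A(\mathfrak{u}_p)|/|\mathfrak{u}_p|)+\Psi(\det A). \] $QW_p$ is the quasiconvex envelope of $W_p$: $QW_p(A)=\inf\{\frac{1}{|D|}\int_DW_p(A+d\varphi):\varphi\in C^\infty_c(D;\mathbb{R}^2)\}$, where $D$ is the unit disc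 in $T_p\mathcal{M}$. *)

theory Defs
  imports "HOL-Analysis.Analysis"
begin

text \<open>Since the connection is flat and torsion-free and the manifold is a disc,
  the parallel vector fields form a 2-dimensional vector space V, and parallel transport
  identifies every tangent space with V. We take V = real^2 (coordinates w.r.t. any fixed
  parallel frame). A parallel vector field is thus a constant vector u :: real^2, the
  metric is a family of inner products g p on real^2 indexed by the points p of M, and
  Hom(T_pM, R^2) is represented by 2x2 real matrices acting by mult_mat_vec.\<close>

definition det2 :: "real^2 \<Rightarrow> real^2 \<Rightarrow> real" where
  "det2 u w = u$1 * w$2 - u$2 * w$1"

definition inner_prod :: "(real^2 \<Rightarrow> real^2 \<Rightarrow> real) \<Rightarrow> bool" where
  "inner_prod h \<longleftrightarrow> bilinear h \<and> (\<forall>u v. h u v = h v u) \<and> (\<forall>u. u \<noteq> 0 \<longrightarrow> h u u > 0)"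

definition gnorm :: "(real^2 \<Rightarrow> real^2 \<Rightarrow> real) \<Rightarrow> real^2 \<Rightarrow> real" where
  "gnorm h u = sqrt (h u u)"

definition gangle :: "(real^2 \<Rightarrow> real^2 \<Rightarrow> real) \<Rightarrow> real^2 \<Rightarrow> real^2 \<Rightarrow> real" where
  "gangle h u w = arccos (h u w / (gnorm h u * gnorm h w))"

definition conformal :: "'m set \<Rightarrow> ('m \<Rightarrow> real^2 \<Rightarrow> real^2 \<Rightarrow> real) \<Rightarrow> bool" where
  "conformal M g \<longleftrightarrow> (\<exists>\<phi>::'m \<Rightarrow> real. (\<forall>p\<in>M. \<phi> p > 0) \<and>
     (\<forall>\<xi> \<eta>. \<forall>p\<in>M. \<forall>q\<in>M. g p \<xi> \<eta> / (\<phi> p)\<^sup>2 = g q \<xi> \<eta> / (\<phi> q)\<^sup>2))"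

text \<open>Energy density W_p(A); c = -a-b.\<close>
definition nu :: "(real^2 \<Rightarrow> real^2 \<Rightarrow> real) \<Rightarrow> real^2 \<Rightarrow> real^2 \<Rightarrow> real" where
  "nu h a b = sqrt (h a a * h b b - (h a b)\<^sup>2)"

definition detA :: "(real^2 \<Rightarrow> real^2 \<Rightarrow> real) \<Rightarrow> real^2 \<Rightarrow> real^2 \<Rightarrow> real^2^2 \<Rightarrow> real" where
  "detA h a b A = det2 (A *v a) (A *v b) / nu h a b"

definition rho :: "(real^2 \<Rightarrow> real^2 \<Rightarrow> real) \<Rightarrow> real^2 \<Rightarrow> real^2 \<Rightarrow> real^2 \<Rightarrow> real" where
  "rho h a b u = gnorm h u / (gnorm h a + gnorm h b + gnorm h (- a - b))"

definition Wdens :: "(real \<Rightarrow> real) \<Rightarrow> (real \<Rightarrow> real) \<Rightarrow> (real^2 \<Rightarrow> real^2 \<Rightarrow> real)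
    \<Rightarrow> real^2 \<Rightarrow> real^2 \<Rightarrow> real^2^2 \<Rightarrow> real" where
  "Wdens Phi Psi h a b A =
     (\<Sum>u\<leftarrow>[a, b, - a - b]. rho h a b u * Phi (norm (A *v u) / gnorm h u)) + Psi (detA h a b A)"

fun Ck :: "nat \<Rightarrow> (real^2 \<Rightarrow> real^2) \<Rightarrow> bool" where
  "Ck 0 f = continuous_on UNIV f"
| "Ck (Suc k) f = (f differentiable_on UNIV \<and> (\<forall>v. Ck k (\<lambda>x. frechet_derivative f (at x) v)))"

definition smooth :: "(real^2 \<Rightarrow> real^2) \<Rightarrow> bool" where
  "smooth f \<longleftrightarrow> (\<forall>k. Ck k f)"

definition gdisc :: "(real^2 \<Rightarrow> real^2 \<Rightarrow> real) \<Rightarrow> (real^2) set" where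
  "gdisc h = {v. h v v < 1}"

definition test_maps :: "(real^2) set \<Rightarrow> (real^2 \<Rightarrow> real^2) set" where
  "test_maps D = {\<phi>. smooth \<phi> \<and> compact (closure {x. \<phi> x \<noteq> 0}) \<and> closure {x. \<phi> x \<noteq> 0} \<subseteq> D}"

definition dmat :: "(real^2 \<Rightarrow> real^2) \<Rightarrow> real^2 \<Rightarrow> real^2^2" where
  "dmat \<phi> x = matrix (frechet_derivative \<phi> (at x))"

text \<open>Quasiconvex envelope QW_p(A) (values in [0,\<infinity>]; W \<ge> 0 so the
  nonnegative integral is used; |D| is the Lebesgue measure of D in coordinates,
  the average being independent of the chosen Lebesgue normalisation).\<close>
definition QW :: "(real \<Rightarrow> real) \<Rightarrow> (real \<Rightarrow> real) \<Rightarrow> (real^2 \<Rightarrow> real^2 \<Rightarrow> real)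
    \<Rightarrow> real^2 \<Rightarrow> real^2 \<Rightarrow> real^2^2 \<Rightarrow> ennreal" where
  "QW Phi Psi h a b A =
     (INF \<phi>\<in>test_maps (gdisc h).
        (\<integral>\<^sup>+ x. indicator (gdisc h) x * ennreal (Wdens Phi Psi h a b (A + dmat \<phi> x)) \<partial>lborel)
        / emeasure lborel (gdisc h))"

text \<open>R is a rotation of the oriented Euclidean plane (real^2, h) by angle \<theta>, the
  orientation being the one in which (a,b) is positive.\<close>
definition is_rotation :: "(real^2 \<Rightarrow> real^2 \<Rightarrow> real) \<Rightarrow> real^2 \<Rightarrow> real^2 \<Rightarrow> real \<Rightarrow> real^2^2 \<Rightarrow> bool" where
  "is_rotation h a b \<theta> R \<longleftrightarrow>
     (\<forall>u w. h (R *v u) (R *v w) = h u w) \<and>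
     (\<forall>u. h u (R *v u) = cos \<theta> * h u u) \<and>
     (\<forall>u. u \<noteq> 0 \<longrightarrow> sgn (det2 u (R *v u)) = sgn (sin \<theta>) * sgn (det2 a b))"

end

theory Submission
  imports Defs
begin

(* At the point o the vectors a, b and c = -a-b have equal length and pairwise angle 2 pi/3; by
  conformality g_p is a positive multiple of g_o, so this holds at every p. The rotation R by pi/3 is
  then forced to send a to a + b = -c and b to -a, hence c to -b: composing A with R permutes the
  three stretch terms of W_p up to sign, their weights being equal, and leaves det A unchanged, so
  W_p(A R) = W_p(A). Since det R = 1 and R preserves the g_p-unit disc, phi |-> phi o R is a
  bijection of the test maps with d(phi o R) = (d phi o R) R which preserves Lebesgue measure, so
  QW_p(A R) <= QW_p(A); applying this to R^-1 gives equality. *)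

(* a, b and -a-b have equal h-length and pairwise h-angle 2 pi/3 *)
definition equilateral :: "(real^2 \<Rightarrow> real^2 \<Rightarrow> real) \<Rightarrow> real^2 \<Rightarrow> real^2 \<Rightarrow> bool" where
  "equilateral h a b \<longleftrightarrow> h b b = h a a \<and> h a b = - h a a / 2"

lemma inner_prod_sym: "inner_prod h \<Longrightarrow> h u w = h w u"
  unfolding inner_prod_def by blast

lemma inner_prod_linear_combination:
  assumes "inner_prod h"
  shows "h (x *\<^sub>R u + y *\<^sub>R v) w = x * h u w + y * h v w"
    and "h w (x *\<^sub>R u + y *\<^sub>R v) = x * h w u + y * h w v"
  using assms unfolding inner_prod_def
  by (simp_all add: bilinear_ladd bilinear_radd bilinear_lmul bilinear_rmul)

lemma inner_prod_self_nonneg: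
  assumes "inner_prod h"
  shows "h w w \<ge> 0"
  using assms bilinear_lzero[of h w] unfolding inner_prod_def
  by (cases "w = 0") (auto simp: less_imp_le)

lemma inner_prod_self_add:
  assumes "inner_prod h"
  shows "h (u + v) (u + v) = h u u + 2 * h u v + h v v"
    and "h (u - v) (u - v) = h u u - 2 * h u v + h v v"
    and "h (- u - v) (- u - v) = h u u + 2 * h u v + h v v"
proof -
  have "h (x *\<^sub>R u + y *\<^sub>R v) (x *\<^sub>R u + y *\<^sub>R v) = x * x * h u u + 2 * x * y * h u v + y * y * h v v"
    for x y
    using inner_prod_linear_combination[OF assms] inner_prod_sym[OF assms, of v u]
    by (simp add: algebra_simps)
  from this[of 1 1] this[of 1 "-1"] this[of "-1" "-1"]
  show "h (u + v) (u + v) = h u u + 2 * h u v + h v v"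
    and "h (u - v) (u - v) = h u u - 2 * h u v + h v v"
    and "h (- u - v) (- u - v) = h u u + 2 * h u v + h v v"
    by simp_all
qed

lemma equilateral_of_gnorm_gangle:
  assumes ip: "inner_prod h" and "a \<noteq> 0"
    and len: "gnorm h a = gnorm h b" and angle: "gangle h a b = 2 * pi / 3"
  shows "equilateral h a b"
proof -
  have pos: "h a a > 0"
    using ip \<open>a \<noteq> 0\<close> unfolding inner_prod_def by blast
  have bb: "h b b = h a a"
    using len inner_prod_self_nonneg[OF ip, of a] inner_prod_self_nonneg[OF ip, of b]
    by (simp add: gnorm_def)
  have "h (a + b) (a + b) \<ge> 0" and "h (a - b) (a - b) \<ge> 0"
    using inner_prod_self_nonneg[OF ip] by auto
  then have "- 1 \<le> h a b / h a a" and "h a b / h a a \<le> 1"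
    unfolding inner_prod_self_add[OF ip] bb using pos by (auto simp: field_simps)
  moreover have "arccos (h a b / h a a) = 2 * pi / 3"
    using angle bb pos by (simp add: gangle_def gnorm_def)
  moreover have "cos (2 * pi / 3) = - 1 / 2"
    using cos_pi_minus[of "pi / 3"] by (simp add: cos_60)
  ultimately have "h a b / h a a = - 1 / 2"
    by (metis cos_arccos)
  then show ?thesis
    using bb pos by (simp add: equilateral_def field_simps)
qed

lemma conformal_equilateral_transfer:
  assumes "conformal M g" and "p \<in> M" and "q \<in> M" and "equilateral (g q) a b"
  shows "equilateral (g p) a b"
proof -
  obtain \<phi> :: "'a \<Rightarrow> real" where "\<phi> p > 0" "\<phi> q > 0"
    and "\<And>\<xi> \<eta>. g p \<xi> \<eta> / (\<phi> p)\<^sup>2 = g q \<xi> \<eta> / (\<phi> q)\<^sup>2"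
    using assms(1-3) unfolding conformal_def by blast
  then have "g p \<xi> \<eta> = ((\<phi> p)\<^sup>2 / (\<phi> q)\<^sup>2) * g q \<xi> \<eta>" for \<xi> \<eta>
    by (simp add: field_simps)
  then show ?thesis
    using assms(4) by (simp add: equilateral_def)
qed

lemma equilateral_rotate:
  assumes "inner_prod h" and "equilateral h a b"
  shows "equilateral h b (- a - b)"
proof -
  have "h b (- a - b) = (-1) * h b a + (-1) * h b b"
    using inner_prod_linear_combination(2)[OF assms(1), of b "-1" a "-1" b] by simp
  then show ?thesis
    using assms inner_prod_self_add(3)[OF assms(1), of a b] inner_prod_sym[OF assms(1), of b a]
    by (simp add: equilateral_def)
qed

lemma det2_rotate: "det2 b (- a - b) = det2 a b"
  by (simp add: det2_def algebra_simps)

lemma det2_matrix_vector_mult: "det2 (R *v u) (R *v v) = det R * det2 u v"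
  by (simp add: det_2 det2_def matrix_vector_mult_def sum_2 algebra_simps)

lemma equilateral_eq_add:
  assumes ip: "inner_prod h" and equi: "equilateral h u e" and indep: "det2 u e \<noteq> 0"
    and vv: "h v v = h u u" and uv: "2 * h u v = h u u"
    and orient: "sgn (det2 u v) = sgn (det2 u e)"
  shows "v = u + e"
proof -
  define N where "N = h u u"
  have "u \<noteq> 0"
    using indep by (auto simp: det2_def)
  then have "N > 0"
    using ip unfolding inner_prod_def N_def by blast
  define x where "x = det2 v e / det2 u e"
  define y where "y = det2 u v / det2 u e"
  have "det2 u e *\<^sub>R v = det2 v e *\<^sub>R u + det2 u v *\<^sub>R e"
    by (simp add: vec_eq_iff forall_2 det2_def algebra_simps)
  then have v: "v = x *\<^sub>R u + y *\<^sub>R e"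
    using indep by (simp add: x_def y_def vec_eq_iff field_simps)
  have "h u v = x * N - y * N / 2" and "h v v = x * (x * N - y * N / 2) + y * (x * (- N / 2) + y * N)"
    using equi inner_prod_sym[OF ip, of e u]
    by (simp_all add: v inner_prod_linear_combination[OF ip] equilateral_def N_def)
  then have "(2 * x - y - 1) * N = 0" and "(x * x - x * y + y * y - 1) * N = 0"
    using vv uv by (simp_all add: N_def algebra_simps)
  then have "x = (1 + y) / 2" and "(y - 1) * (y + 1) = 0"
    using \<open>N > 0\<close> by (simp_all, algebra)
  moreover have "sgn y * sgn (det2 u e) = 1 * sgn (det2 u e)"
    using orient indep by (simp add: y_def flip: sgn_mult)
  then have "y > 0"
    using indep by (simp add: sgn_zero_iff sgn_1_pos)
  ultimately show ?thesis
    using v by simp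
qed

lemma rotation_pi3_apply:
  assumes rot: "is_rotation h a b (pi / 3) R" and ip: "inner_prod h"
    and equi: "equilateral h u e" and indep: "det2 u e \<noteq> 0"
    and orient: "sgn (det2 u e) = sgn (det2 a b)"
  shows "R *v u = u + e"
proof (rule equilateral_eq_add[OF ip equi indep])
  have "u \<noteq> 0"
    using indep by (auto simp: det2_def)
  then show "sgn (det2 u (R *v u)) = sgn (det2 u e)"
    using rot orient by (simp add: is_rotation_def sin_60)
  show "h (R *v u) (R *v u) = h u u" and "2 * h u (R *v u) = h u u"
    using rot by (simp_all add: is_rotation_def cos_60 mult.commute)
qed

lemma rotation_pi3_equilateral:
  assumes rot: "is_rotation h a b (pi / 3) R" and ip: "inner_prod h"
    and equi: "equilateral h a b" and indep: "det2 a b \<noteq> 0"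
  shows "R *v a = a + b" and "R *v b = - a" and "det R = 1"
proof -
  show Ra: "R *v a = a + b"
    using rotation_pi3_apply[OF rot ip equi indep] by simp
  have "R *v b = b + (- a - b)"
    using rotation_pi3_apply[OF rot ip equilateral_rotate[OF ip equi]] indep
    by (simp add: det2_rotate)
  then show Rb: "R *v b = - a"
    by simp
  have "det R * det2 a b = 1 * det2 a b"
    using det2_matrix_vector_mult[of R a b] by (simp add: Ra Rb det2_def algebra_simps)
  then show "det R = 1"
    using indep by simp
qed

lemma Wdens_mult_right_rotation:
  assumes ip: "inner_prod h" and equi: "equilateral h a b"
    and Ra: "R *v a = a + b" and Rb: "R *v b = - a"
  shows "Wdens Phi Psi h a b (B ** R) = Wdens Phi Psi h a b B"
proof -
  have neg: "C *v (- v) = - (C *v v)" for C :: "real^2^2" and v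
    using linear_neg[OF matrix_vector_mul_linear] .
  define P Q where "P = B *v a" and "Q = B *v b"
  have images: "(B ** R) *v a = P + Q" "(B ** R) *v b = - P" "(B ** R) *v (- a - b) = - Q"
    "B *v (- a - b) = - (P + Q)"
    by (simp_all add: P_def Q_def Ra Rb neg algebra_simps flip: matrix_vector_mul_assoc)
  have "gnorm h b = gnorm h a" and "gnorm h (- a - b) = gnorm h a"
    using equi inner_prod_self_add(3)[OF ip, of a b] by (simp_all add: gnorm_def equilateral_def)
  moreover from this have "rho h a b b = rho h a b a" and "rho h a b (- a - b) = rho h a b a"
    by (simp_all add: rho_def)
  moreover have "norm (- P - Q) = norm (P + Q)"
    by (simp only: diff_conv_add_uminus minus_add_distrib[symmetric] norm_minus_cancel)
  moreover have "det2 (P + Q) (- P) = det2 P Q"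
    by (simp add: det2_def algebra_simps)
  ultimately show ?thesis
    unfolding Wdens_def detA_def by (simp add: images P_def [symmetric] Q_def [symmetric] add_ac)
qed

lemma unimodular_inverse:
  fixes T :: "real^'n^'n"
  assumes "\<bar>det T\<bar> = 1"
  obtains S where "T ** S = mat 1" and "S ** T = mat 1" and "\<bar>det S\<bar> = 1"
proof -
  obtain S where TS: "T ** S = mat 1" and ST: "S ** T = mat 1"
    using assms invertible_det_nz[of T] by (auto simp: invertible_def)
  have "\<bar>det T\<bar> * \<bar>det S\<bar> = 1"
    using arg_cong[OF TS, of det] by (simp add: det_mul flip: abs_mult)
  then show ?thesis
    using that TS ST assms by simp
qed

lemma lborel_distr_matrix_vector_mult:
  fixes T :: "real^'n::{finite,wellorder}^'n::{finite,wellorder}"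
  assumes det_T: "\<bar>det T\<bar> = 1"
  shows "distr lborel borel ((*v) T) = lborel"
proof (rule lborel_eqI[symmetric])
  obtain S where TS: "T ** S = mat 1" and ST: "S ** T = mat 1" and det_S: "\<bar>det S\<bar> = 1"
    using unimodular_inverse[OF det_T] .
  have T_meas: "(*v) T \<in> borel_measurable borel"
    by (intro borel_measurable_continuous_onI linear_continuous_on matrix_vector_mul_bounded_linear)
  fix l u :: "real^'n::{finite,wellorder}" assume "\<And>b. b \<in> Basis \<Longrightarrow> l \<bullet> b \<le> u \<bullet> b"
  have "(*v) T -` box l u = (*v) S ` box l u"
    using TS ST by (force simp: matrix_vector_mul_assoc intro: image_eqI[where x = "T *v _"])
  moreover have "(*v) S ` box l u \<in> lmeasurable"
    and "measure lebesgue ((*v) S ` box l u) = measure lebesgue (box l u)"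
    using measurable_linear_image[of "(*v) S" "box l u"] measure_linear_image[of "(*v) S" "box l u"]
      det_S
    by simp_all
  ultimately have "emeasure lebesgue ((*v) T -` box l u) = emeasure lebesgue (box l u)"
    by (simp add: emeasure_eq_measure2)
  moreover have "(*v) T -` box l u \<in> sets borel"
    using T_meas by (simp add: measurable_sets_borel)
  ultimately have "emeasure lborel ((*v) T -` box l u) = emeasure lborel (box l u)"
    by simp
  then show "emeasure (distr lborel borel ((*v) T)) (box l u) = (\<Prod>b\<in>Basis. (u - l) \<bullet> b)"
    using T_meas \<open>\<And>b. b \<in> Basis \<Longrightarrow> l \<bullet> b \<le> u \<bullet> b\<close> by (simp add: emeasure_distr)
qed simp

(* No measurability of f is required: composition with T is a bijection between the simple minorants
  of f and those of f o T, and it preserves simple integrals. *)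
lemma nn_integral_bij_measure_preserving:
  assumes T: "T \<in> M \<rightarrow>\<^sub>M M" and T': "T' \<in> M \<rightarrow>\<^sub>M M"
    and inv1: "\<And>x. T (T' x) = x" and inv2: "\<And>x. T' (T x) = x"
    and distr: "distr M M T = M"
  shows "(\<integral>\<^sup>+ x. f (T x) \<partial>M) = (\<integral>\<^sup>+ x. f x \<partial>M)"
proof -
  have simple_integral_comp: "integral\<^sup>S M (g \<circ> T) = integral\<^sup>S M g" if "simple_function M g" for g
  proof -
    have "integral\<^sup>S M (g \<circ> T) = (\<integral>\<^sup>+ x. g (T x) \<partial>M)"
      using simple_function_comp[OF T that] by (simp add: nn_integral_eq_simple_integral comp_def)
    also have "\<dots> = integral\<^sup>N (distr M M T) g"
      using T borel_measurable_simple_function[OF that] by (simp add: nn_integral_distr)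
    finally show ?thesis
      using that by (simp add: distr nn_integral_eq_simple_integral)
  qed
  have simple_below_comp: "{g. simple_function M g \<and> g \<le> (\<lambda>x. f (T x))} =
      (\<lambda>g. g \<circ> T) ` {g. simple_function M g \<and> g \<le> f}"
  proof (intro equalityI subsetI)
    fix g assume "g \<in> {g. simple_function M g \<and> g \<le> (\<lambda>x. f (T x))}"
    then have "g \<circ> T' \<in> {g. simple_function M g \<and> g \<le> f}" and "g = (g \<circ> T') \<circ> T"
      using simple_function_comp[OF T', of g] inv1 inv2
      by (auto simp: le_fun_def comp_def dest: spec[of _ "T' _"])
    then show "g \<in> (\<lambda>g. g \<circ> T) ` {g. simple_function M g \<and> g \<le> f}" by blast
  qed (use simple_function_comp[OF T] in \<open>auto simp: le_fun_def comp_def\<close>)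
  show ?thesis
    unfolding nn_integral_def simple_below_comp image_image using simple_integral_comp
    by (intro SUP_cong) auto
qed

lemma has_derivative_comp_matrix_vector_mult:
  fixes f :: "real^'n \<Rightarrow> 'a::real_normed_vector" and T :: "real^'n^'n"
  assumes "f differentiable at (T *v x)"
  shows "((\<lambda>y. f (T *v y)) has_derivative (\<lambda>v. frechet_derivative f (at (T *v x)) (T *v v))) (at x)"
  using diff_chain_at[OF bounded_linear_imp_has_derivative[OF matrix_vector_mul_bounded_linear]
      assms[unfolded frechet_derivative_works]]
  by (simp add: comp_def)

lemma frechet_derivative_comp_matrix_vector_mult:
  fixes f :: "real^'n \<Rightarrow> 'a::real_normed_vector" and T :: "real^'n^'n"
  assumes "f differentiable at (T *v x)"
  shows "frechet_derivative (\<lambda>y. f (T *v y)) (at x) = (\<lambda>v. frechet_derivative f (at (T *v x)) (T *v v))"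
  using frechet_derivative_at[OF has_derivative_comp_matrix_vector_mult[OF assms]] by simp

lemma Ck_comp_matrix_vector_mult:
  fixes T :: "real^2^2"
  shows "Ck k f \<Longrightarrow> Ck k (\<lambda>y. f (T *v y))"
proof (induction k arbitrary: f)
  case 0
  then show ?case
    by (auto intro: continuous_on_compose2 linear_continuous_on)
next
  case (Suc k)
  then have f_diff: "f differentiable at z" for z
    by (simp add: differentiable_on_eq_differentiable_at)
  have "(\<lambda>y. f (T *v y)) differentiable_on UNIV"
    using has_derivative_comp_matrix_vector_mult[OF f_diff]
    by (auto simp: differentiable_on_eq_differentiable_at differentiable_def)
  moreover have "Ck k (\<lambda>x. frechet_derivative (\<lambda>y. f (T *v y)) (at x) v)" for v
    using Suc.IH[of "\<lambda>z. frechet_derivative f (at z) (T *v v)"] Suc.prems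
    by (simp add: frechet_derivative_comp_matrix_vector_mult[OF f_diff])
  ultimately show ?case by simp
qed

lemma dmat_comp_matrix_vector_mult:
  assumes "f differentiable at (T *v x)"
  shows "dmat (\<lambda>y. f (T *v y)) x = dmat f (T *v x) ** T"
proof -
  have "linear (frechet_derivative f (at (T *v x)))"
    using assms by (simp add: frechet_derivative_works has_derivative_linear)
  then show ?thesis
    unfolding dmat_def frechet_derivative_comp_matrix_vector_mult[OF assms]
    using matrix_compose[of "(*v) T" "frechet_derivative f (at (T *v x))"]
    by (simp add: comp_def)
qed

lemma test_maps_comp_matrix_vector_mult:
  assumes "invertible T" and isometry: "\<And>x. h (T *v x) (T *v x) = h x x"
    and "\<phi> \<in> test_maps (gdisc h)"
  shows "(\<lambda>y. \<phi> (T *v y)) \<in> test_maps (gdisc h)"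
proof -
  obtain S where TS: "T ** S = mat 1" and ST: "S ** T = mat 1"
    using \<open>invertible T\<close> by (auto simp: invertible_def)
  have ST_x: "S *v (T *v x) = x" and TS_x: "T *v (S *v x) = x" for x
    using TS ST by (simp_all add: matrix_vector_mul_assoc)
  have "smooth \<phi>" and compact_supp: "compact (closure {x. \<phi> x \<noteq> 0})"
    and supp_disc: "closure {x. \<phi> x \<noteq> 0} \<subseteq> gdisc h"
    using assms(3) by (auto simp: test_maps_def)
  have "{x. \<phi> (T *v x) \<noteq> 0} = (*v) S ` {y. \<phi> y \<noteq> 0}"
    using ST_x TS_x by (force intro: image_eqI[where x = "T *v _"])
  moreover have "inj ((*v) S)"
    by (metis TS_x injI)
  ultimately have supp: "closure {x. \<phi> (T *v x) \<noteq> 0} = (*v) S ` closure {y. \<phi> y \<noteq> 0}"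
    by (simp add: closure_injective_linear_image)
  have "smooth (\<lambda>y. \<phi> (T *v y))"
    using \<open>smooth \<phi>\<close> Ck_comp_matrix_vector_mult by (auto simp: smooth_def)
  moreover have "compact (closure {x. \<phi> (T *v x) \<noteq> 0})"
    unfolding supp by (intro compact_continuous_image compact_supp linear_continuous_on) simp
  moreover have "closure {x. \<phi> (T *v x) \<noteq> 0} \<subseteq> gdisc h"
    using supp_disc isometry[of "S *v _"] unfolding supp by (auto simp: gdisc_def TS_x)
  ultimately show ?thesis
    by (simp add: test_maps_def)
qed

lemma QW_mult_right_le:
  assumes det_T: "\<bar>det T\<bar> = 1" and isometry: "\<And>x. h (T *v x) (T *v x) = h x x"
    and W_invariant: "\<And>B. Wdens Phi Psi h a b (B ** T) = Wdens Phi Psi h a b B"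
  shows "QW Phi Psi h a b (A ** T) \<le> QW Phi Psi h a b A"
  unfolding QW_def
proof (rule INF_mono)
  define D where "D = gdisc h"
  obtain S where TS: "T ** S = mat 1" and ST: "S ** T = mat 1"
    using unimodular_inverse[OF det_T] .
  fix \<phi> assume \<phi>: "\<phi> \<in> test_maps (gdisc h)"
  let ?\<psi> = "\<lambda>y. \<phi> (T *v y)"
  have "smooth \<phi>"
    using \<phi> by (simp add: test_maps_def)
  then have \<phi>_diff: "\<phi> differentiable at z" for z
    by (auto simp: smooth_def differentiable_on_eq_differentiable_at dest: spec[of _ 1])
  have integrand: "indicator D x * ennreal (Wdens Phi Psi h a b (A ** T + dmat ?\<psi> x)) =
     (\<lambda>y. indicator D y * ennreal (Wdens Phi Psi h a b (A + dmat \<phi> y))) (T *v x)" for x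
  proof -
    have "A ** T + dmat ?\<psi> x = (A + dmat \<phi> (T *v x)) ** T"
      by (simp add: dmat_comp_matrix_vector_mult[OF \<phi>_diff] matrix_matrix_mult_def vec_eq_iff
          sum.distrib algebra_simps)
    then show ?thesis
      using isometry[of x] W_invariant by (simp add: D_def gdisc_def indicator_def)
  qed
  have "distr lborel lborel ((*v) T) = distr lborel borel ((*v) T)"
    by (rule distr_cong) simp_all
  then have T_preserving: "distr lborel lborel ((*v) T) = lborel"
    using det_T by (simp add: lborel_distr_matrix_vector_mult)
  have "(\<integral>\<^sup>+ x. indicator D x * ennreal (Wdens Phi Psi h a b (A ** T + dmat ?\<psi> x)) \<partial>lborel)
      = (\<integral>\<^sup>+ x. indicator D x * ennreal (Wdens Phi Psi h a b (A + dmat \<phi> x)) \<partial>lborel)"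
    unfolding integrand
    by (rule nn_integral_bij_measure_preserving[where T' = "(*v) S"])
      (use TS ST T_preserving in
        \<open>auto simp: matrix_vector_mul_assoc intro: linear_continuous_on borel_measurable_continuous_onI\<close>)
  moreover have "?\<psi> \<in> test_maps (gdisc h)"
    using test_maps_comp_matrix_vector_mult[OF _ isometry \<phi>] det_T
    by (simp add: invertible_det_nz)
  ultimately show "\<exists>\<psi>\<in>test_maps (gdisc h).
      (\<integral>\<^sup>+ x. indicator (gdisc h) x * ennreal (Wdens Phi Psi h a b (A ** T + dmat \<psi> x)) \<partial>lborel)
        / emeasure lborel (gdisc h)
      \<le> (\<integral>\<^sup>+ x. indicator (gdisc h) x * ennreal (Wdens Phi Psi h a b (A + dmat \<phi> x)) \<partial>lborel)
        / emeasure lborel (gdisc h)"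
    unfolding D_def by (intro bexI[of _ ?\<psi>]) auto
qed

lemma QW_mult_right_eq:
  assumes det_T: "\<bar>det T\<bar> = 1" and isometry: "\<And>x. h (T *v x) (T *v x) = h x x"
    and W_invariant: "\<And>B. Wdens Phi Psi h a b (B ** T) = Wdens Phi Psi h a b B"
  shows "QW Phi Psi h a b (A ** T) = QW Phi Psi h a b A"
proof (rule antisym)
  show "QW Phi Psi h a b (A ** T) \<le> QW Phi Psi h a b A"
    using assms by (rule QW_mult_right_le)
  obtain S where TS: "T ** S = mat 1" and ST: "S ** T = mat 1" and det_S: "\<bar>det S\<bar> = 1"
    using unimodular_inverse[OF det_T] .
  have S_isometry: "h (S *v x) (S *v x) = h x x" for x
    using isometry[of "S *v x"] TS by (simp add: matrix_vector_mul_assoc)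
  have S_W_invariant: "Wdens Phi Psi h a b (B ** S) = Wdens Phi Psi h a b B" for B
    using W_invariant[of "B ** S"] ST by (simp flip: matrix_mul_assoc)
  have "QW Phi Psi h a b ((A ** T) ** S) \<le> QW Phi Psi h a b (A ** T)"
    by (rule QW_mult_right_le[OF det_S S_isometry S_W_invariant])
  then show "QW Phi Psi h a b A \<le> QW Phi Psi h a b (A ** T)"
    using TS by (simp flip: matrix_mul_assoc)
qed

theorem proposition5p6:
  fixes M :: "'m set" and g :: "'m \<Rightarrow> real^2 \<Rightarrow> real^2 \<Rightarrow> real"
    and a b :: "real^2" and o0 :: 'm
    and Phi Psi :: "real \<Rightarrow> real"
    and alpha_Phi C_Phi L_Phi alpha_Psi C_Psi L_Psi :: real
  assumes g_inner: "\<forall>p\<in>M. inner_prod (g p)"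
    and indep: "det2 a b \<noteq> 0"
    and Phi_nonneg: "\<forall>r\<ge>0. Phi r \<ge> 0"
    and Phi_zero: "\<forall>r\<ge>0. Phi r = 0 \<longleftrightarrow> r = 1"
    and Phi_lower: "alpha_Phi > 0" "\<forall>r\<ge>0. Phi r \<ge> alpha_Phi * (r - 1)\<^sup>2"
    and Phi_upper: "C_Phi > 0" "\<forall>r\<ge>0. Phi r \<le> C_Phi * (1 + r\<^sup>2)"
    and Phi_lip: "L_Phi > 0"
      "\<forall>r s. r > 0 \<longrightarrow> s > 0 \<longrightarrow> \<bar>Phi r - Phi s\<bar> \<le> L_Phi * (1 + \<bar>r\<bar> + \<bar>s\<bar>) * \<bar>r - s\<bar>"
    and Psi_nonneg: "\<forall>x. Psi x \<ge> 0"
    and Psi_zero: "\<forall>x. Psi x = 0 \<longleftrightarrow> x = 1"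
    and Psi_lower: "alpha_Psi > 0" "\<forall>x<0. Psi x > alpha_Psi * sqrt \<bar>x\<bar>"
    and Psi_upper: "C_Psi > 0" "\<forall>x. Psi x < C_Psi * (1 + \<bar>x\<bar>)"
    and Psi_lip: "L_Psi > 0" "\<forall>x y. \<bar>Psi x - Psi y\<bar> \<le> L_Psi * \<bar>x - y\<bar>"
    and conf: "conformal M g"
    and o_in: "o0 \<in> M"
    and o_len: "gnorm (g o0) a = gnorm (g o0) b"
    and o_ang: "gangle (g o0) a b = 2 * pi / 3"
  shows "\<forall>p\<in>M. \<forall>R A. is_rotation (g p) a b (pi / 3) R \<longrightarrow>
           QW Phi Psi (g p) a b (A ** R) = QW Phi Psi (g p) a b A"
proof (intro ballI allI impI)
  fix p R A
  assume "p \<in> M" and rot: "is_rotation (g p) a b (pi / 3) R"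
  have ip: "inner_prod (g p)"
    using g_inner \<open>p \<in> M\<close> by blast
  have "a \<noteq> 0"
    using indep by (auto simp: det2_def)
  then have "equilateral (g o0) a b"
    using g_inner o_in o_len o_ang by (simp add: equilateral_of_gnorm_gangle)
  then have equi: "equilateral (g p) a b"
    using conformal_equilateral_transfer[OF conf \<open>p \<in> M\<close> o_in] by blast
  note R_action = rotation_pi3_equilateral[OF rot ip equi indep]
  show "QW Phi Psi (g p) a b (A ** R) = QW Phi Psi (g p) a b A"
  proof (rule QW_mult_right_eq)
    show "\<bar>det R\<bar> = 1"
      using R_action(3) by simp
    show "g p (R *v x) (R *v x) = g p x x" for x
      using rot by (simp add: is_rotation_def)
    show "Wdens Phi Psi (g p) a b (B ** R) = Wdens Phi Psi (g p) a b B" for B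
      using Wdens_mult_right_rotation[OF ip equi R_action(1,2)] .
  qed
qed

end
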